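(* Let $N,j,k,m$ be integers. Work with a variable $q^{1/8}$, set $v=q^{1/2}$, $\{n\}=v^n-v^{-n}$, $A(a,k)=\{a-k\}\{a+k\}$ and $t_{j,N}=i^{N-1-j}q^{(N+j)^2/8}$. Then: (1) $A(N-j,k)-A(N+j,k)-2\{2j\}\{N\}\{N-1\}/\{1\}$ is divisible by $\{N\}^2$ in $\mathbb Z[v^{\pm1}]$; (2) $\{N-j\}=-\{N+j\}+\{N\}(v^j+v^{-j})$; (3) there exists $Q\in\mathbb Q[v^{\pm1}]$ such that $t_{-j,N}^m=t_{j,N}^m+\frac{mj}{2}\,t_{j,N}^m\{N\}+t_{j,N}^m(v^N+1)^2Q$.
   Context: All quantities are Laurent polynomials in $q^{1/8}$ with coefficients in $\mathbb Q(i)$; $\{2j\}/\{1\}\in\mathbb Z[v^{\pm1}]$, so the expression in (1) lies in $\mathbb Z[v^{\pm1}]$. *)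

theory Defs
  imports Complex_Main "HOL-Computational_Algebra.Formal_Laurent_Series"
begin

text \<open>Laurent polynomials in x = q^(1/8) with complex coefficients (Q(i) is a subfield of C),
  represented as formal Laurent series; v = q^(1/2) = x^4.\<close>

type_synonym lp = "complex fls"

definition vpow :: "int \<Rightarrow> lp" where
  "vpow n = fls_X_intpow (4 * n)"

definition br :: "int \<Rightarrow> lp" where
  "br n = vpow n - vpow (- n)"

definition AA :: "int \<Rightarrow> int \<Rightarrow> lp" where
  "AA a k = br (a - k) * br (a + k)"

definition tt :: "int \<Rightarrow> int \<Rightarrow> lp" where
  "tt j N = fls_const (\<i> powi (N - 1 - j)) * fls_X_intpow ((N + j)\<^sup>2)"

definition in_ZV :: "lp \<Rightarrow> bool" where
  "in_ZV f \<longleftrightarrow> finite {n. fls_nth f n \<noteq> 0} \<and> (\<forall>n. fls_nth f n \<in> \<int>) \<and> (\<forall>n. fls_nth f n \<noteq> 0 \<longrightarrow> 4 dvd n)"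

definition in_QV :: "lp \<Rightarrow> bool" where
  "in_QV f \<longleftrightarrow> finite {n. fls_nth f n \<noteq> 0} \<and> (\<forall>n. fls_nth f n \<in> \<rat>) \<and> (\<forall>n. fls_nth f n \<noteq> 0 \<longrightarrow> 4 dvd n)"

end

theory Submission
  imports Defs
begin

text \<open>For part (1), A(N-j,k) - A(N+j,k) = -{2N}{2j} = -{N}(v^N + v^-N){2j}; writing
  {2j} = {1} S with S integral, the whole expression collapses to -{N}^2 (v + v^-1) S. For part (3),
  t(-j,N) = t(j,N) s^j with s = -v^-N, and s - 1 = -(v^N + 1)/v^N. Both S and the correction term of
  part (3) come from the second-order expansion x^n = 1 + n(x - 1) + (x - 1)^2 R of an integer power
  of a unit x, where R is a Laurent polynomial in x with integer coefficients.\<close>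

definition coeff_ring :: "complex set \<Rightarrow> bool" where
  "coeff_ring S \<longleftrightarrow> 1 \<in> S \<and> (\<forall>a\<in>S. \<forall>b\<in>S. a - b \<in> S \<and> a * b \<in> S)"

definition vlaurent :: "complex set \<Rightarrow> lp \<Rightarrow> bool" where
  "vlaurent S f \<longleftrightarrow> finite {n. fls_nth f n \<noteq> 0} \<and> (\<forall>n. fls_nth f n \<in> S) \<and>
     (\<forall>n. fls_nth f n \<noteq> 0 \<longrightarrow> 4 dvd n)"

lemma in_ZV_iff_vlaurent_Ints: "in_ZV = vlaurent \<int>"
  by (simp add: fun_eq_iff in_ZV_def vlaurent_def)

lemma in_QV_iff_vlaurent_Rats: "in_QV = vlaurent \<rat>"
  by (simp add: fun_eq_iff in_QV_def vlaurent_def)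

lemma coeff_ring_Ints: "coeff_ring \<int>"
  by (simp add: coeff_ring_def)

lemma coeff_ring_Rats: "coeff_ring \<rat>"
  by (simp add: coeff_ring_def)

lemma fls_nth_monomial:
  "fls_nth (fls_const (c::complex) * fls_X_intpow k) n = (if n = k then c else 0)"
  by (simp add: fls_X_intpow_times_comm[of k "fls_const c"] fls_X_intpow_times_conv_shift(1))

lemma fls_eq_sum_monomials:
  fixes f :: lp
  assumes "finite {n. fls_nth f n \<noteq> 0}"
  shows "f = (\<Sum>n | fls_nth f n \<noteq> 0. fls_const (fls_nth f n) * fls_X_intpow n)"
proof (rule fls_eqI)
  fix m
  show "fls_nth f m = fls_nth (\<Sum>n | fls_nth f n \<noteq> 0. fls_const (fls_nth f n) * fls_X_intpow n) m"
    unfolding fls_nth_sum fls_nth_monomial using assms by (simp add: sum.delta)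
qed

context
  fixes S :: "complex set"
  assumes S: "coeff_ring S"
begin

lemma coeff_ring_closed:
  shows coeff_ring_zero: "0 \<in> S"
    and coeff_ring_uminus: "a \<in> S \<Longrightarrow> - a \<in> S"
    and coeff_ring_add: "a \<in> S \<Longrightarrow> b \<in> S \<Longrightarrow> a + b \<in> S"
    and coeff_ring_mult: "a \<in> S \<Longrightarrow> b \<in> S \<Longrightarrow> a * b \<in> S"
proof -
  show zero: "0 \<in> S" using S unfolding coeff_ring_def by (metis diff_self)
  show uminus: "- a \<in> S" if "a \<in> S" for a
    using S zero that unfolding coeff_ring_def by (metis diff_0)
  show "a + b \<in> S" if "a \<in> S" "b \<in> S" for a b
    using S uminus[OF that(2)] that(1) unfolding coeff_ring_def by (metis diff_minus_eq_add)
  show "a * b \<in> S" if "a \<in> S" "b \<in> S" for a b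
    using S that unfolding coeff_ring_def by blast
qed

lemma vlaurent_0: "vlaurent S 0"
  by (simp add: vlaurent_def coeff_ring_zero)

lemma vlaurent_add: "vlaurent S f \<Longrightarrow> vlaurent S g \<Longrightarrow> vlaurent S (f + g)"
proof -
  assume f: "vlaurent S f" and g: "vlaurent S g"
  have "{n. fls_nth (f + g) n \<noteq> 0} \<subseteq> {n. fls_nth f n \<noteq> 0} \<union> {n. fls_nth g n \<noteq> 0}"
    by auto
  with f g show ?thesis
    unfolding vlaurent_def by (auto intro: finite_subset coeff_ring_add)
qed

lemma vlaurent_uminus: "vlaurent S f \<Longrightarrow> vlaurent S (- f)"
  by (simp add: vlaurent_def coeff_ring_uminus)

lemma vlaurent_diff: "vlaurent S f \<Longrightarrow> vlaurent S g \<Longrightarrow> vlaurent S (f - g)"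
  using vlaurent_add[of f "- g"] vlaurent_uminus[of g] by simp

lemma vlaurent_sum:
  "finite A \<Longrightarrow> (\<And>x. x \<in> A \<Longrightarrow> vlaurent S (f x)) \<Longrightarrow> vlaurent S (\<Sum>x\<in>A. f x)"
  by (induction A rule: finite_induct) (auto intro: vlaurent_add vlaurent_0)

lemma vlaurent_monomial: "c \<in> S \<Longrightarrow> 4 dvd k \<Longrightarrow> vlaurent S (fls_const c * fls_X_intpow k)"
proof -
  assume "c \<in> S" "4 dvd k"
  moreover have "{n. fls_nth (fls_const c * fls_X_intpow k) n \<noteq> 0} \<subseteq> {k}"
    by (auto simp: fls_nth_monomial)
  ultimately show ?thesis
    unfolding vlaurent_def by (auto intro: finite_subset coeff_ring_zero simp: fls_nth_monomial)
qed

lemma vlaurent_mult: "vlaurent S f \<Longrightarrow> vlaurent S g \<Longrightarrow> vlaurent S (f * g)"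
proof -
  assume f: "vlaurent S f" and g: "vlaurent S g"
  define A where "A = {n. fls_nth f n \<noteq> 0}"
  define B where "B = {n. fls_nth g n \<noteq> 0}"
  have fin: "finite A" "finite B" using f g by (auto simp: vlaurent_def A_def B_def)
  have "f * g = (\<Sum>a\<in>A. fls_const (fls_nth f a) * fls_X_intpow a) *
                (\<Sum>b\<in>B. fls_const (fls_nth g b) * fls_X_intpow b)"
    using fls_eq_sum_monomials[of f] fls_eq_sum_monomials[of g] fin by (simp add: A_def B_def)
  also have "\<dots> = (\<Sum>a\<in>A. \<Sum>b\<in>B. fls_const (fls_nth f a * fls_nth g b) * fls_X_intpow (a + b))"
    by (simp add: sum_product mult_ac fls_X_intpow_times_fls_X_intpow flip: fls_const_mult_const)
  finally have "f * g = \<dots>" .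
  moreover have "vlaurent S \<dots>"
    using f g fin unfolding A_def B_def
    by (intro vlaurent_sum vlaurent_monomial) (auto intro: coeff_ring_mult simp: vlaurent_def)
  ultimately show ?thesis by simp
qed

lemma vlaurent_const: "c \<in> S \<Longrightarrow> vlaurent S (fls_const c)"
  using vlaurent_monomial[of c 0] by simp

lemma vlaurent_1: "vlaurent S 1"
  using vlaurent_const[of 1] S by (simp add: coeff_ring_def)

lemma vlaurent_of_int: "vlaurent S (of_int n)"
  by (induction n rule: int_induct[where k=0]) (auto intro: vlaurent_add vlaurent_diff vlaurent_0 vlaurent_1)

lemma vlaurent_vpow: "vlaurent S (vpow n)"
  using vlaurent_monomial[of 1 "4 * n"] S by (simp add: vpow_def coeff_ring_def)

lemma power_int_expansion_at_1:
  assumes x: "x \<noteq> 0" "vlaurent S x" "vlaurent S (inverse x)"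
  shows "\<exists>R. vlaurent S R \<and> x powi n = 1 + of_int n * (x - 1) + (x - 1)\<^sup>2 * R"
proof (induction n rule: int_induct[where k=0])
  case base
  show ?case using vlaurent_0 by auto
next
  case (step1 i)
  then obtain R where R: "vlaurent S R" "x powi i = 1 + of_int i * (x - 1) + (x - 1)\<^sup>2 * R"
    by blast
  have "x powi (i + 1) = x * x powi i"
    using x(1) by (simp add: power_int_add_1')
  also have "\<dots> = 1 + of_int (i + 1) * (x - 1) + (x - 1)\<^sup>2 * (x * R + of_int i)"
    unfolding R(2) by (simp add: algebra_simps power2_eq_square)
  finally have "x powi (i + 1) = \<dots>" .
  moreover have "vlaurent S (x * R + of_int i)"
    using R(1) x(2) by (intro vlaurent_add vlaurent_mult vlaurent_of_int)
  ultimately show ?case by blast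
next
  case (step2 i)
  then obtain R where R: "vlaurent S R" "x powi i = 1 + of_int i * (x - 1) + (x - 1)\<^sup>2 * R"
    by blast
  have "x powi (i - 1) = inverse x * x powi i"
    using x(1) by (simp add: power_int_diff field_simps)
  also have "\<dots> = 1 + of_int (i - 1) * (x - 1) + (x - 1)\<^sup>2 * (inverse x * (R + 1 - of_int i))"
    unfolding R(2) using x(1) by (simp add: field_simps power2_eq_square)
  finally have "x powi (i - 1) = \<dots>" .
  moreover have "vlaurent S (inverse x * (R + 1 - of_int i))"
    using R(1) x(3) by (intro vlaurent_mult vlaurent_diff vlaurent_add vlaurent_1 vlaurent_of_int)
  ultimately show ?case by blast
qed

lemma power_int_minus_1_factor:
  assumes "x \<noteq> 0" "vlaurent S x" "vlaurent S (inverse x)"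
  shows "\<exists>G. vlaurent S G \<and> x powi n - 1 = (x - 1) * G"
proof -
  obtain R where R: "vlaurent S R" "x powi n = 1 + of_int n * (x - 1) + (x - 1)\<^sup>2 * R"
    using power_int_expansion_at_1[OF assms] by blast
  then have "x powi n - 1 = (x - 1) * ((x - 1) * R + of_int n)"
    by (simp add: algebra_simps power2_eq_square)
  moreover have "vlaurent S ((x - 1) * R + of_int n)"
    using R(1) assms(2) by (intro vlaurent_mult vlaurent_diff vlaurent_add vlaurent_1 vlaurent_of_int)
  ultimately show ?thesis by blast
qed

end

lemma vpow_add: "vpow (a + b) = vpow a * vpow b"
  by (simp add: vpow_def fls_X_intpow_times_fls_X_intpow distrib_left)

lemma vpow_nonzero [simp]: "vpow a \<noteq> 0"
  by (simp add: vpow_def)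

lemma vpow_uminus: "vpow (- a) = inverse (vpow a)"
  by (simp add: vpow_def fls_inverse_X_intpow)

lemma vpow_diff: "vpow (a - b) = vpow a / vpow b"
  using vpow_add[of a "- b"] by (simp add: vpow_uminus divide_inverse)

lemma fls_X_intpow_power_int:
  "fls_X_intpow a powi n = (fls_X_intpow (a * n) :: 'a::division_ring fls)"
  using power_int_mult[of "fls_X :: 'a fls" a n] by simp

lemma vpow_power_int: "vpow a powi n = vpow (a * n)"
  by (simp add: vpow_def fls_X_intpow_power_int mult.assoc)

lemma vpow_double: "vpow (2 * a) = vpow a ^ 2"
  using vpow_add[of a a] by (simp add: power2_eq_square)

lemma br_1_nonzero: "br 1 \<noteq> 0"
proof
  assume "br 1 = 0"
  then have "fls_nth (br 1) 4 = 0" by simp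
  then show False by (simp add: br_def vpow_def)
qed

lemma br_double_eq_br_1_mult: "\<exists>S. vlaurent \<int> S \<and> br (2 * j) = br 1 * S"
proof -
  have "vlaurent \<int> (inverse (vpow 2))"
    using vlaurent_vpow[OF coeff_ring_Ints, of "- 2"] by (simp add: vpow_uminus)
  then obtain G where G: "vlaurent \<int> G" "vpow 2 powi (2 * j) - 1 = (vpow 2 - 1) * G"
    using power_int_minus_1_factor[OF coeff_ring_Ints, of "vpow 2" "2 * j"] vlaurent_vpow[OF coeff_ring_Ints]
    by auto
  have "br (2 * j) = vpow (- 2 * j) * (vpow 2 powi (2 * j) - 1)"
    by (simp add: br_def vpow_power_int right_diff_distrib flip: vpow_add)
  also have "\<dots> = vpow (- 2 * j) * (vpow 2 - 1) * G"
    by (simp add: G(2))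
  also have "vpow (- 2 * j) * (vpow 2 - 1) = br 1 * vpow (1 - 2 * j)"
    by (simp add: br_def algebra_simps flip: vpow_add)
  finally have "br (2 * j) = br 1 * (vpow (1 - 2 * j) * G)"
    by (simp only: mult.assoc)
  moreover have "vlaurent \<int> (vpow (1 - 2 * j) * G)"
    using G(1) by (intro vlaurent_mult vlaurent_vpow coeff_ring_Ints)
  ultimately show ?thesis by blast
qed

lemma AA_difference_field_identity:
  fixes a b c V S :: "'a::field"
  assumes nz: "a \<noteq> 0" "b \<noteq> 0" "c \<noteq> 0" "V \<noteq> 0" "V - inverse V \<noteq> 0"
    and S: "b\<^sup>2 - inverse (b\<^sup>2) = (V - inverse V) * S"
  shows "(a / b / c - inverse (a / b / c)) * (a / b * c - inverse (a / b * c))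
       - (a * b / c - inverse (a * b / c)) * (a * b * c - inverse (a * b * c))
       - 2 * (b\<^sup>2 - inverse (b\<^sup>2)) * (a - inverse a) * (a / V - inverse (a / V)) / (V - inverse V)
     = (a - inverse a)\<^sup>2 * (- (V + inverse V) * S)"
proof -
  have diff: "(a / b / c - inverse (a / b / c)) * (a / b * c - inverse (a / b * c))
       - (a * b / c - inverse (a * b / c)) * (a * b * c - inverse (a * b * c))
      = - (a\<^sup>2 - inverse (a\<^sup>2)) * (b\<^sup>2 - inverse (b\<^sup>2))"
    using nz by (simp add: field_simps) algebra
  have quot: "2 * (b\<^sup>2 - inverse (b\<^sup>2)) * (a - inverse a) * (a / V - inverse (a / V)) / (V - inverse V)
      = 2 * S * (a - inverse a) * (a / V - inverse (a / V))"
    using nz(5) by (simp add: S)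
  have "- (a\<^sup>2 - inverse (a\<^sup>2)) * ((V - inverse V) * S) - 2 * S * (a - inverse a) * (a / V - inverse (a / V))
      = (a - inverse a)\<^sup>2 * (- (V + inverse V) * S)"
    using nz by (simp add: field_simps) algebra
  then show ?thesis
    unfolding diff quot unfolding S .
qed

lemma AA_difference_divisible:
  "\<exists>P. in_ZV P \<and>
     AA (N - j) k - AA (N + j) k - 2 * br (2 * j) * br N * br (N - 1) / br 1 = (br N)\<^sup>2 * P"
proof -
  obtain S where S: "vlaurent \<int> S" "br (2 * j) = br 1 * S"
    using br_double_eq_br_1_mult by blast
  have S': "(vpow j)\<^sup>2 - inverse ((vpow j)\<^sup>2) = (vpow 1 - inverse (vpow 1)) * S"
    using S(2) unfolding br_def by (simp only: vpow_uminus vpow_double)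
  have br_1: "vpow 1 - inverse (vpow 1) \<noteq> 0"
    using br_1_nonzero by (simp add: br_def vpow_uminus)
  have "AA (N - j) k - AA (N + j) k - 2 * br (2 * j) * br N * br (N - 1) / br 1
      = (br N)\<^sup>2 * (- (vpow 1 + vpow (- 1)) * S)"
    unfolding AA_def br_def
    by (simp only: vpow_add vpow_diff vpow_uminus vpow_double
        AA_difference_field_identity[OF vpow_nonzero vpow_nonzero vpow_nonzero vpow_nonzero br_1 S'])
  moreover have "in_ZV (- (vpow 1 + vpow (- 1)) * S)"
    unfolding in_ZV_iff_vlaurent_Ints
    using S(1) by (intro vlaurent_mult vlaurent_uminus vlaurent_add vlaurent_vpow coeff_ring_Ints)
  ultimately show ?thesis by blast
qed

lemma br_diff_eq: "br (N - j) = - br (N + j) + br N * (vpow j + vpow (- j))"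
  unfolding br_def by (simp add: vpow_add vpow_diff vpow_uminus field_simps)

lemma i_power_int_shift: "\<i> powi (a - b) * (- 1) powi b = \<i> powi (a + b)"
proof -
  have "\<i> powi (a + b) = \<i> powi ((a - b) + 2 * b)"
    by (simp add: algebra_simps)
  also have "\<dots> = \<i> powi (a - b) * \<i> powi (2 * b)"
    by (rule power_int_add) simp
  also have "\<i> powi (2 * b) = (\<i> powi 2) powi b"
    by (rule power_int_mult)
  finally show ?thesis by simp
qed

lemma tt_uminus: "tt (- j) N = tt j N * (- inverse (vpow N)) powi j"
proof -
  have "- inverse (vpow N) = fls_const (- 1) * fls_X_intpow (- 4 * N)"
    by (simp add: vpow_def fls_inverse_X_intpow)
  then have "(- inverse (vpow N)) powi j = fls_const ((- 1) powi j) * fls_X_intpow (- 4 * N * j)"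
    by (simp only: power_int_mult_distrib fls_const_power_int fls_X_intpow_power_int)
  then have "tt j N * (- inverse (vpow N)) powi j
      = fls_const (\<i> powi (N - 1 - j) * (- 1) powi j) * (fls_X_intpow ((N + j)\<^sup>2) * fls_X_intpow (- 4 * N * j))"
    unfolding tt_def by (simp add: mult_ac flip: fls_const_mult_const)
  also have "\<dots> = fls_const (\<i> powi (N - 1 + j)) * fls_X_intpow ((N + j)\<^sup>2 + - 4 * N * j)"
    by (simp only: fls_X_intpow_times_fls_X_intpow i_power_int_shift)
  also have "(N + j)\<^sup>2 + - 4 * N * j = (N + - j)\<^sup>2"
    by (simp add: power2_eq_square algebra_simps)
  finally show ?thesis
    unfolding tt_def by (simp only: diff_minus_eq_add)
qed

lemma neg_inverse_expansion_field_identity: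
  fixes w n R :: "'a::field_char_0"
  assumes "w \<noteq> 0"
  shows "1 + n * (- inverse w - 1) + (- inverse w - 1)\<^sup>2 * R
       = 1 + n / 2 * (w - inverse w) + (w + 1)\<^sup>2 * (R * inverse (w\<^sup>2) - n / 2 * inverse w)"
  using assms by (simp add: field_simps) algebra

lemma tt_power_int_expansion:
  "\<exists>Q. in_QV Q \<and>
     tt (- j) N powi m = tt j N powi m + fls_const (of_int (m * j) / 2) * tt j N powi m * br N
       + tt j N powi m * (vpow N + 1)\<^sup>2 * Q"
proof -
  define s where "s = - inverse (vpow N)"
  have s: "s \<noteq> 0" "vlaurent \<rat> s" "vlaurent \<rat> (inverse s)"
    unfolding s_def using vlaurent_vpow[OF coeff_ring_Rats, of N] vlaurent_vpow[OF coeff_ring_Rats, of "- N"]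
    by (auto simp: vpow_uminus intro: vlaurent_uminus[OF coeff_ring_Rats])
  obtain R where R: "vlaurent \<rat> R" "s powi (m * j) = 1 + of_int (m * j) * (s - 1) + (s - 1)\<^sup>2 * R"
    using power_int_expansion_at_1[OF coeff_ring_Rats s] by blast
  define c where "c = fls_const (of_int (m * j) / 2 :: complex)"
  have c: "c = of_int (m * j) / 2"
    unfolding c_def by (simp add: fls_of_int flip: fls_const_divide_const)
  define Q where "Q = R * vpow (- (2 * N)) - c * vpow (- N)"
  have "s powi (m * j) = 1 + c * br N + (vpow N + 1)\<^sup>2 * Q"
    unfolding R(2) unfolding s_def Q_def br_def c
    by (simp only: neg_inverse_expansion_field_identity[OF vpow_nonzero] vpow_uminus vpow_double)
  moreover have "tt (- j) N powi m = tt j N powi m * s powi (m * j)"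
    by (simp add: tt_uminus s_def power_int_mult_distrib mult.commute[of m] power_int_mult)
  moreover have "in_QV Q"
    unfolding in_QV_iff_vlaurent_Rats Q_def c_def
    using R(1) by (intro vlaurent_diff vlaurent_mult vlaurent_vpow vlaurent_const coeff_ring_Rats
        Rats_divide Rats_of_int Rats_number_of)
  ultimately show ?thesis
    unfolding c_def by (auto simp: algebra_simps)
qed

theorem lemma2p1:
  fixes N j k m :: int
  shows "(\<exists>P. in_ZV P \<and>
            AA (N - j) k - AA (N + j) k - 2 * br (2 * j) * br N * br (N - 1) / br 1 = (br N)\<^sup>2 * P)
       \<and> br (N - j) = - br (N + j) + br N * (vpow j + vpow (- j))
       \<and> (\<exists>Q. in_QV Q \<and>
            tt (- j) N powi m = tt j N powi m
              + fls_const (of_int (m * j) / 2) * tt j N powi m * br N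
              + tt j N powi m * (vpow N + 1)\<^sup>2 * Q)"
  using AA_difference_divisible br_diff_eq tt_power_int_expansion by blast

end
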